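(* Let $n\ge 1$, let $x_1,\dots,x_n$ be distinct integers each greater than $1$, and let $D=\{1,0,x_1,\dots,x_n\}$. Then $\sigma(D)=4-n+\sum_{i=1}^n x_i$.
   Context: A signed tree is a pair $(T,s)$ where $T$ is a finite tree and $s:E(T)\to\{+,-\}$. The signed degree $sdeg(v)$ of a vertex is the number of incident positive edges minus the number of incident negative edges. $(T,s)$ realizes (satisfies) a set $D$ of integers if $D=\{sdeg(v):v\in V(T)\}$. For a set $D$ containing $1$ or $-1$, $\sigma(D)=\min\{|V(T)|: \text{some signed tree }(T,s)\text{ realizes }D\}$. *)

theory Defs
  imports Main
begin

definition is_graph :: "nat set \<Rightarrow> nat set set \<Rightarrow> bool" where
  "is_graph V E \<longleftrightarrow> finite V \<and> (\<forall>e\<in>E. \<exists>u v. u \<in> V \<and> v \<in> V \<and> u \<noteq> v \<and> e = {u, v})"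

definition adj :: "nat set set \<Rightarrow> (nat \<times> nat) set" where
  "adj E = {(u, v). {u, v} \<in> E}"

definition connected_graph :: "nat set \<Rightarrow> nat set set \<Rightarrow> bool" where
  "connected_graph V E \<longleftrightarrow> (\<forall>u\<in>V. \<forall>v\<in>V. (u, v) \<in> (adj E)\<^sup>*)"

definition has_cycle :: "nat set set \<Rightarrow> bool" where
  "has_cycle E \<longleftrightarrow> (\<exists>vs. length vs \<ge> 3 \<and> distinct vs \<and>
      (\<forall>i < length vs - 1. {vs ! i, vs ! (Suc i)} \<in> E) \<and> {last vs, hd vs} \<in> E)"

definition is_tree :: "nat set \<Rightarrow> nat set set \<Rightarrow> bool" where
  "is_tree V E \<longleftrightarrow> is_graph V E \<and> V \<noteq> {} \<and> connected_graph V E \<and> \<not> has_cycle E"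

text \<open>Signs: True = positive edge, False = negative edge.\<close>
definition sdeg :: "nat set set \<Rightarrow> (nat set \<Rightarrow> bool) \<Rightarrow> nat \<Rightarrow> int" where
  "sdeg E s v = int (card {e \<in> E. v \<in> e \<and> s e}) - int (card {e \<in> E. v \<in> e \<and> \<not> s e})"

definition realizes :: "nat set \<Rightarrow> nat set set \<Rightarrow> (nat set \<Rightarrow> bool) \<Rightarrow> int set \<Rightarrow> bool" where
  "realizes V E s D \<longleftrightarrow> is_tree V E \<and> D = sdeg E s ` V"

definition sigma :: "int set \<Rightarrow> nat" where
  "sigma D = (LEAST k. \<exists>V E s. realizes V E s D \<and> card V = k)"

end

(*
  In a signed tree, deg v = sdeg v + 2 * (number of negative edges at v). Hence a vertex w with
  sdeg w = 0 has degree at least 2 and lies on a negative edge {w, y}, which forces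
  deg y >= sdeg y + 2, while every vertex v has degree at least max 1 (sdeg v). Summing deg v - 1,
  which totals |V| - 2 over a tree, shows that a tree realizing {1, 0} together with a set X of
  integers greater than 1 has at least 4 + sum of (c - 1) over c in X vertices.

  The bound is attained: the path with signs +, -, + realizes {1, 0} on four vertices and has a
  leaf l of signed degree 1; attaching c - 1 positive pendant leaves to l raises it to c and
  produces a new leaf of signed degree 1, so the elements of X can be added one at a time.
*)
theory Submission
  imports Defs
begin

lemma is_graph_finite_edges: "is_graph V E \<Longrightarrow> finite E"
proof -
  assume g: "is_graph V E"
  then have "E \<subseteq> Pow V" unfolding is_graph_def by fastforce
  with g show ?thesis unfolding is_graph_def by (meson finite_Pow_iff finite_subset)
qed

lemma is_graph_edge_endpoints:
  assumes "is_graph V E" "{a, b} \<in> E"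
  shows "a \<noteq> b" "a \<in> V" "b \<in> V"
  using assms unfolding is_graph_def by (auto simp: doubleton_eq_iff)

lemma is_graph_edge_other:
  assumes "is_graph V E" "e \<in> E" "a \<in> e"
  obtains b where "e = {a, b}"
proof -
  obtain u v where "e = {u, v}" using assms(1,2) unfolding is_graph_def by blast
  with assms(3) have "e = {a, if a = u then v else u}" by auto
  then show thesis by (rule that)
qed

lemma is_graph_outside_edges: "is_graph V E \<Longrightarrow> z \<notin> V \<Longrightarrow> e \<in> E \<Longrightarrow> z \<notin> e"
  unfolding is_graph_def by fastforce

lemma is_graph_mono_vertices: "is_graph V E \<Longrightarrow> finite V' \<Longrightarrow> V \<subseteq> V' \<Longrightarrow> is_graph V' E"
  unfolding is_graph_def by (meson subsetD)

lemma is_graph_insert_edge: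
  "is_graph V E \<Longrightarrow> u \<in> V \<Longrightarrow> w \<in> V \<Longrightarrow> u \<noteq> w \<Longrightarrow> is_graph V (insert {u, w} E)"
  unfolding is_graph_def by auto

lemma is_tree_finite: "is_tree V E \<Longrightarrow> finite V"
  unfolding is_tree_def is_graph_def by simp

definition is_path :: "nat set set \<Rightarrow> nat list \<Rightarrow> bool" where
  "is_path E ps \<longleftrightarrow> distinct ps \<and> (\<forall>i < length ps - 1. {ps ! i, ps ! Suc i} \<in> E)"

lemma has_cycle_iff_path:
  "has_cycle E \<longleftrightarrow> (\<exists>vs. 3 \<le> length vs \<and> is_path E vs \<and> {last vs, hd vs} \<in> E)"
  unfolding has_cycle_def is_path_def by auto

lemma has_cycle_mono: "has_cycle E \<Longrightarrow> E \<subseteq> E' \<Longrightarrow> has_cycle E'"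
  unfolding has_cycle_iff_path is_path_def by blast

lemma is_path_snoc:
  assumes "is_path E ps" "ps \<noteq> []" "b \<notin> set ps" "{last ps, b} \<in> E"
  shows "is_path E (ps @ [b])"
  unfolding is_path_def
proof (intro conjI allI impI)
  show "distinct (ps @ [b])" using assms(1,3) unfolding is_path_def by simp
  fix i assume i: "i < length (ps @ [b]) - 1"
  show "{(ps @ [b]) ! i, (ps @ [b]) ! Suc i} \<in> E"
  proof (cases "Suc i < length ps")
    case True
    then show ?thesis using assms(1) unfolding is_path_def by (simp add: nth_append)
  next
    case False
    then have "i = length ps - 1" "Suc i = length ps" using i by auto
    then show ?thesis using assms(2,4) by (simp add: nth_append last_conv_nth)
  qed
qed

lemma is_path_back_edge_has_cycle:
  assumes "is_path E ps" "j + 2 < length ps" "{last ps, ps ! j} \<in> E"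
  shows "has_cycle E"
  unfolding has_cycle_iff_path
proof (intro exI conjI)
  show "3 \<le> length (drop j ps)" using assms(2) by simp
  show "is_path E (drop j ps)" using assms(1) unfolding is_path_def
    by (auto simp: add.commute[of j] less_diff_conv)
  show "{last (drop j ps), hd (drop j ps)} \<in> E" using assms(2,3) by (simp add: hd_drop_conv_nth)
qed

lemma cycle_vertex_two_neighbours:
  assumes "is_path E vs" "3 \<le> length vs" "{last vs, hd vs} \<in> E" "z \<in> set vs"
  obtains p q where "p \<noteq> q" "{z, p} \<in> E" "{z, q} \<in> E"
proof -
  define L where "L = length vs"
  obtain k where k: "k < L" "z = vs ! k" using assms(4) unfolding L_def by (metis in_set_conv_nth)
  have d: "distinct vs" and e: "\<And>i. i < L - 1 \<Longrightarrow> {vs ! i, vs ! Suc i} \<in> E"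
    using assms(1) unfolding is_path_def L_def by auto
  have "vs \<noteq> []" using assms(2) by auto
  then have c: "{vs ! (L - 1), vs ! 0} \<in> E"
    using assms(3) unfolding L_def by (simp add: last_conv_nth hd_conv_nth)
  have neq: "vs ! i \<noteq> vs ! j" if "i < L" "j < L" "i \<noteq> j" for i j
    using d that unfolding L_def by (simp add: nth_eq_iff_index_eq)
  consider "k = 0" | "k = L - 1" | "0 < k" "k < L - 1" using k by linarith
  then show thesis
  proof cases
    case 1
    have "{z, vs ! 1} \<in> E" using e[of 0] k 1 assms(2) unfolding L_def by simp
    moreover have "{z, vs ! (L - 1)} \<in> E" using c k 1 by (simp add: insert_commute)
    moreover have "vs ! 1 \<noteq> vs ! (L - 1)" using assms(2) by (intro neq) (auto simp: L_def)
    ultimately show thesis using that by blast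
  next
    case 2
    have "Suc (L - 2) = L - 1" using assms(2) unfolding L_def by simp
    then have "{z, vs ! (L - 2)} \<in> E" using e[of "L - 2"] k 2 by (simp add: insert_commute)
    moreover have "{z, vs ! 0} \<in> E" using c k 2 by simp
    moreover have "vs ! (L - 2) \<noteq> vs ! 0" using assms(2) by (intro neq) (auto simp: L_def)
    ultimately show thesis using that by blast
  next
    case 3
    have "{z, vs ! (k - 1)} \<in> E" using e[of "k - 1"] k 3 by (simp add: insert_commute)
    moreover have "{z, vs ! Suc k} \<in> E" using e[of k] k 3 by simp
    moreover have "vs ! (k - 1) \<noteq> vs ! Suc k" using 3 by (intro neq) auto
    ultimately show thesis using that by blast
  qed
qed

lemma has_cycle_insert_pendant:
  assumes "has_cycle (insert {v, z} E)" "v \<noteq> z" "\<forall>e\<in>E. z \<notin> e"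
  shows "has_cycle E"
proof -
  obtain vs where L: "3 \<le> length vs" and p: "is_path (insert {v, z} E) vs"
    and c: "{last vs, hd vs} \<in> insert {v, z} E"
    using assms(1) unfolding has_cycle_iff_path by blast
  have "z \<notin> set vs"
  proof
    assume "z \<in> set vs"
    then obtain p q where "p \<noteq> q" "{z, p} \<in> insert {v, z} E" "{z, q} \<in> insert {v, z} E"
      using cycle_vertex_two_neighbours[OF p L c] by blast
    moreover have "p = v" if "{z, p} \<in> insert {v, z} E" for p
      using that assms(2,3) by (auto simp: doubleton_eq_iff)
    ultimately show False by blast
  qed
  then have avoid: "{a, b} \<noteq> {v, z}" if "a \<in> set vs" "b \<in> set vs" for a b
    using that by (auto simp: doubleton_eq_iff)
  have "is_path E vs"
    unfolding is_path_def
  proof (intro conjI allI impI)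
    show "distinct vs" using p unfolding is_path_def by simp
    fix i assume "i < length vs - 1"
    then show "{vs ! i, vs ! Suc i} \<in> E"
      using p avoid[of "vs ! i" "vs ! Suc i"] unfolding is_path_def by auto
  qed
  moreover have "{last vs, hd vs} \<in> E"
    using c avoid L by (metis insertE last_in_set hd_in_set list.size(3) not_numeral_le_zero)
  ultimately show ?thesis unfolding has_cycle_iff_path using L by blast
qed

lemma is_tree_insert_pendant:
  assumes t: "is_tree V E" and v: "v \<in> V" and z: "z \<notin> V"
  shows "is_tree (insert z V) (insert {v, z} E)"
proof -
  have g: "is_graph V E" and c: "connected_graph V E" and nc: "\<not> has_cycle E"
    using t unfolding is_tree_def by auto
  have vz: "v \<noteq> z" using v z by auto
  have "is_graph (insert z V) E"
    by (rule is_graph_mono_vertices[OF g]) (use g in \<open>auto simp: is_graph_def\<close>)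
  then have g': "is_graph (insert z V) (insert {v, z} E)"
    by (rule is_graph_insert_edge) (use v vz in auto)
  let ?R = "(adj (insert {v, z} E))\<^sup>*"
  have "adj E \<subseteq> adj (insert {v, z} E)" unfolding adj_def by auto
  then have old: "(a, b) \<in> ?R" if "a \<in> V" "b \<in> V" for a b
    using c that unfolding connected_graph_def by (meson rtrancl_mono subsetD)
  have "(v, z) \<in> ?R" "(z, v) \<in> ?R"
    unfolding adj_def by (auto simp: insert_commute intro!: r_into_rtrancl)
  then have "(a, v) \<in> ?R \<and> (v, a) \<in> ?R" if "a \<in> insert z V" for a
    using that old v by auto
  then have "connected_graph (insert z V) (insert {v, z} E)"
    unfolding connected_graph_def by (meson rtrancl_trans)
  moreover have "\<not> has_cycle (insert {v, z} E)"
    using nc has_cycle_insert_pendant[OF _ vz] is_graph_outside_edges[OF g z] by metis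
  ultimately show ?thesis using g' unfolding is_tree_def by simp
qed

definition degree :: "nat set set \<Rightarrow> nat \<Rightarrow> nat" where
  "degree E u = card {e \<in> E. u \<in> e}"

lemma acyclic_graph_has_leaf:
  assumes g: "is_graph V E" and nc: "\<not> has_cycle E" and ne: "V \<noteq> {}"
  obtains a where "a \<in> V" "degree E a \<le> 1"
proof -
  define P where "P ps \<longleftrightarrow> ps \<noteq> [] \<and> set ps \<subseteq> V \<and> is_path E ps" for ps
  obtain v0 where "v0 \<in> V" using ne by blast
  then have "P [v0]" unfolding P_def is_path_def by simp
  moreover have "length ps < card V + 1" if "P ps" for ps
  proof -
    have "length ps = card (set ps)" using that distinct_card unfolding P_def is_path_def by metis
    also have "\<dots> \<le> card V" using that g card_mono unfolding P_def is_graph_def by metis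
    finally show ?thesis by simp
  qed
  ultimately obtain ps where Pps: "P ps" and longest: "\<And>qs. P qs \<Longrightarrow> length qs \<le> length ps"
    using ex_has_greatest_nat[of P "[v0]" length "card V + 1"] by metis
  define a where "a = last ps"
  have ps: "ps \<noteq> []" "set ps \<subseteq> V" "is_path E ps" using Pps unfolding P_def by auto
  have aV: "a \<in> V" using ps unfolding a_def by auto
  have nbr: "b = ps ! (length ps - 2)" if ab: "{a, b} \<in> E" for b
  proof -
    \<comment> \<open>By maximality \<open>b\<close> lies on the path; any position but the penultimate one closes a cycle.\<close>
    have "b \<in> set ps"
    proof (rule ccontr)
      assume "b \<notin> set ps"
      then have "P (ps @ [b])"
        using ps is_path_snoc[OF ps(3,1)] ab is_graph_edge_endpoints[OF g ab] unfolding P_def a_def by simp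
      then show False using longest[of "ps @ [b]"] by simp
    qed
    then obtain j where j: "j < length ps" "b = ps ! j" by (metis in_set_conv_nth)
    have "j \<noteq> length ps - 1"
      using j is_graph_edge_endpoints(1)[OF g ab] ps(1) unfolding a_def by (auto simp: last_conv_nth)
    moreover have "\<not> j + 2 < length ps"
      using is_path_back_edge_has_cycle[OF ps(3), of j] ab j nc unfolding a_def by metis
    ultimately have "j = length ps - 2" using j(1) by linarith
    then show ?thesis using j by simp
  qed
  have "{e \<in> E. a \<in> e} \<subseteq> {{a, ps ! (length ps - 2)}}"
  proof
    fix e assume e: "e \<in> {e \<in> E. a \<in> e}"
    then obtain b where "e = {a, b}" using is_graph_edge_other[OF g] by blast
    with e have "e = {a, b}" "{a, b} \<in> E" by auto
    then show "e \<in> {{a, ps ! (length ps - 2)}}" using nbr by simp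
  qed
  then have "degree E a \<le> 1"
    unfolding degree_def using card_mono[of "{{a, ps ! (length ps - 2)}}"] by simp
  with aV show thesis by (rule that)
qed

lemma acyclic_graph_card_edges_less:
  "is_graph V E \<Longrightarrow> \<not> has_cycle E \<Longrightarrow> V \<noteq> {} \<Longrightarrow> card E < card V"
proof (induction "card V" arbitrary: V E rule: less_induct)
  case less
  then have g: "is_graph V E" and fV: "finite V" unfolding is_graph_def by auto
  obtain a where aV: "a \<in> V" and leaf: "degree E a \<le> 1"
    using acyclic_graph_has_leaf less.prems by metis
  define E' where "E' = {e \<in> E. a \<notin> e}"
  have "E = E' \<union> {e \<in> E. a \<in> e}" unfolding E'_def by auto
  then have "card E \<le> card E' + 1"
    using card_Un_le[of E' "{e \<in> E. a \<in> e}"] leaf unfolding degree_def by simp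
  show ?case
  proof (cases "V - {a} = {}")
    case True
    have "E = {}"
    proof (rule equals0I)
      fix e assume "e \<in> E"
      then obtain u w where "u \<in> V" "w \<in> V" "u \<noteq> w" using g unfolding is_graph_def by meson
      then show False using True by auto
    qed
    then show ?thesis using aV fV by (auto simp: card_gt_0_iff)
  next
    case False
    have "is_graph (V - {a}) E'"
      unfolding is_graph_def
    proof (intro conjI ballI)
      show "finite (V - {a})" using fV by simp
      fix e assume "e \<in> E'"
      then have "e \<in> E" "a \<notin> e" unfolding E'_def by auto
      then obtain u w where "u \<in> V" "w \<in> V" "u \<noteq> w" "e = {u, w}"
        using g unfolding is_graph_def by meson
      with \<open>a \<notin> e\<close> show "\<exists>u w. u \<in> V - {a} \<and> w \<in> V - {a} \<and> u \<noteq> w \<and> e = {u, w}" by auto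
    qed
    moreover have "\<not> has_cycle E'"
      using less.prems(2) has_cycle_mono[of E' E] unfolding E'_def by auto
    ultimately have "card E' < card (V - {a})"
      using less.hyps[of "V - {a}"] False aV fV by (meson card_Diff1_less)
    then show ?thesis using \<open>card E \<le> card E' + 1\<close> aV fV by (simp add: card_Diff1_less_iff)
  qed
qed

lemma sum_degree_eq_twice_card_edges:
  assumes g: "is_graph V E"
  shows "(\<Sum>v\<in>V. degree E v) = 2 * card E"
proof -
  have fV: "finite V" and fE: "finite E" using g is_graph_finite_edges unfolding is_graph_def by auto
  have "(\<Sum>v\<in>V. degree E v) = (\<Sum>v\<in>V. \<Sum>e\<in>E. if v \<in> e then 1 else 0)"
    unfolding degree_def using fE by (simp add: sum.inter_filter[symmetric])
  also have "\<dots> = (\<Sum>e\<in>E. \<Sum>v\<in>V. if v \<in> e then 1 else 0)" by (rule sum.swap)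
  also have "\<dots> = (\<Sum>e\<in>E. 2)"
  proof (rule sum.cong[OF refl])
    fix e assume "e \<in> E"
    then obtain u w where uw: "u \<in> V" "w \<in> V" "u \<noteq> w" "e = {u, w}"
      using g unfolding is_graph_def by meson
    then have "{v \<in> V. v \<in> e} = {u, w}" by auto
    then show "(\<Sum>v\<in>V. if v \<in> e then 1 else 0) = (2::nat)"
      using fV uw(3) by (simp add: sum.inter_filter[symmetric])
  qed
  finally show ?thesis by simp
qed

lemma tree_sum_degree_le:
  assumes "is_tree V E"
  shows "(\<Sum>v\<in>V. int (degree E v) - 1) \<le> int (card V) - 2"
proof -
  have g: "is_graph V E" using assms unfolding is_tree_def by simp
  moreover have "card E < card V"
    using acyclic_graph_card_edges_less[OF g] assms unfolding is_tree_def by simp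
  moreover have "(\<Sum>v\<in>V. int (degree E v)) = 2 * int (card E)"
    using sum_degree_eq_twice_card_edges[OF g] by (metis of_nat_mult of_nat_numeral of_nat_sum)
  ultimately show ?thesis by (simp add: sum_subtractf)
qed

lemma tree_degree_pos:
  assumes "is_tree V E" "u \<in> V" "v \<in> V" "u \<noteq> v"
  shows "1 \<le> degree E u"
proof -
  have "(u, v) \<in> (adj E)\<^sup>*" using assms unfolding is_tree_def connected_graph_def by blast
  then obtain y where "(u, y) \<in> adj E" using assms(4) by (metis converse_rtranclE)
  then have "{u, y} \<in> {e \<in> E. u \<in> e}" unfolding adj_def by simp
  moreover have "finite E"
    using assms(1) unfolding is_tree_def by (simp add: is_graph_finite_edges[of V E])
  ultimately show ?thesis unfolding degree_def by (auto simp: Suc_le_eq card_gt_0_iff)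
qed

lemma sdeg_insert_edge:
  assumes "finite E" "e0 \<notin> E"
  shows "sdeg (insert e0 E) (s(e0 := b)) u = sdeg E s u + (if u \<in> e0 then if b then 1 else -1 else 0)"
proof -
  have "{e \<in> insert e0 E. u \<in> e \<and> (s(e0 := b)) e} =
      (if u \<in> e0 \<and> b then insert e0 {e \<in> E. u \<in> e \<and> s e} else {e \<in> E. u \<in> e \<and> s e})"
    "{e \<in> insert e0 E. u \<in> e \<and> \<not> (s(e0 := b)) e} =
      (if u \<in> e0 \<and> \<not> b then insert e0 {e \<in> E. u \<in> e \<and> \<not> s e} else {e \<in> E. u \<in> e \<and> \<not> s e})"
    using assms(2) by auto
  then show ?thesis unfolding sdeg_def using assms by (auto simp: card_insert_if)
qed

lemma sdeg_outside:
  assumes "is_graph V E" "z \<notin> V"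
  shows "sdeg E s z = 0"
proof -
  have no_edges: "{e \<in> E. z \<in> e \<and> s e} = {}" "{e \<in> E. z \<in> e \<and> \<not> s e} = {}"
    using is_graph_outside_edges[OF assms] by blast+
  show ?thesis unfolding sdeg_def no_edges by simp
qed

lemma sdeg_insert_pendant:
  assumes "is_graph V E" "z \<notin> V"
  shows "sdeg (insert {v, z} E) (s({v, z} := b)) u =
    sdeg E s u + (if u \<in> {v, z} then if b then 1 else -1 else 0)"
  using sdeg_insert_edge[OF is_graph_finite_edges[OF assms(1)]] is_graph_outside_edges[OF assms]
  by blast

lemma degree_eq_sdeg_plus_neg:
  assumes "finite E"
  shows "int (degree E u) = sdeg E s u + 2 * int (card {e \<in> E. u \<in> e \<and> \<not> s e})"
proof -
  have "{e \<in> E. u \<in> e} = {e \<in> E. u \<in> e \<and> s e} \<union> {e \<in> E. u \<in> e \<and> \<not> s e}" by auto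
  then have "degree E u = card {e \<in> E. u \<in> e \<and> s e} + card {e \<in> E. u \<in> e \<and> \<not> s e}"
    unfolding degree_def using assms by (simp add: card_Un_disjoint disjoint_iff)
  then show ?thesis unfolding sdeg_def by simp
qed

lemma tree_add_positive_leaves:
  assumes t: "is_tree V E" and l: "l \<in> V"
  shows "\<exists>V' E' s'. is_tree V' E' \<and> V \<subseteq> V' \<and> card (V' - V) = m
    \<and> (\<forall>u\<in>V - {l}. sdeg E' s' u = sdeg E s u) \<and> sdeg E' s' l = sdeg E s l + int m
    \<and> (\<forall>u\<in>V' - V. sdeg E' s' u = 1)"
proof (induction m)
  case 0
  show ?case using t by (intro exI[of _ V] exI[of _ E] exI[of _ s]) simp
next
  case (Suc m)
  then obtain V' E' s' where t': "is_tree V' E'" and sub: "V \<subseteq> V'" and new: "card (V' - V) = m"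
    and old: "\<forall>u\<in>V - {l}. sdeg E' s' u = sdeg E s u" and at_l: "sdeg E' s' l = sdeg E s l + int m"
    and leaves: "\<forall>u\<in>V' - V. sdeg E' s' u = 1"
    by blast
  have g': "is_graph V' E'" using t' unfolding is_tree_def by simp
  have fV': "finite V'" using is_tree_finite[OF t'] .
  obtain z where z: "z \<notin> V'" using ex_new_if_finite[OF infinite_UNIV_nat fV'] by blast
  have lV': "l \<in> V'" using l sub by blast
  define s2 where "s2 = s'({l, z} := True)"
  have sd: "sdeg (insert {l, z} E') s2 u = sdeg E' s' u + (if u \<in> {l, z} then 1 else 0)" for u
    unfolding s2_def using sdeg_insert_pendant[OF g' z] by simp
  have "is_tree (insert z V') (insert {l, z} E')" using is_tree_insert_pendant[OF t' lV' z] .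
  moreover have "V \<subseteq> insert z V'" using sub by blast
  moreover have "insert z V' - V = insert z (V' - V)" using z sub by blast
  then have "card (insert z V' - V) = Suc m" using z new fV' by simp
  moreover have "\<forall>u\<in>V - {l}. sdeg (insert {l, z} E') s2 u = sdeg E s u"
    using sd old z sub by auto
  moreover have "sdeg (insert {l, z} E') s2 l = sdeg E s l + int (Suc m)"
    using sd at_l by simp
  moreover have "\<forall>u\<in>insert z V' - V. sdeg (insert {l, z} E') s2 u = 1"
    using sd leaves l sdeg_outside[OF g' z] by auto
  ultimately show ?case by blast
qed

lemma four_vertex_base_tree:
  "\<exists>V E s l. is_tree V E \<and> l \<in> V \<and> sdeg E s l = 1 \<and> sdeg E s ` (V - {l}) = {1, 0} \<and> card V = 4"
proof -
  let ?V0 = "{0::nat}" and ?E0 = "{} :: nat set set" and ?s0 = "\<lambda>_ :: nat set. True"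
  let ?V1 = "insert 1 ?V0" and ?E1 = "insert {0, 1} ?E0" and ?s1 = "?s0({0, 1} := False)"
  let ?V2 = "insert 2 ?V1" and ?E2 = "insert {1, 2} ?E1" and ?s2 = "?s1({1, 2} := True)"
  let ?V3 = "insert 3 ?V2" and ?E3 = "insert {0, 3} ?E2" and ?s3 = "?s2({0, 3} := True)"
  have t0: "is_tree ?V0 ?E0"
    unfolding is_tree_def is_graph_def connected_graph_def has_cycle_def by simp
  have t1: "is_tree ?V1 ?E1" by (rule is_tree_insert_pendant[OF t0]) auto
  have t2: "is_tree ?V2 ?E2" by (rule is_tree_insert_pendant[OF t1]) auto
  have t3: "is_tree ?V3 ?E3" by (rule is_tree_insert_pendant[OF t2]) auto
  have g: "is_graph ?V0 ?E0" "is_graph ?V1 ?E1" "is_graph ?V2 ?E2"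
    using t0 t1 t2 unfolding is_tree_def by simp_all
  have "sdeg ?E3 ?s3 u = (if u = 2 \<or> u = 3 then 1 else 0)" for u
    using sdeg_insert_pendant[OF g(1), of 1 0 ?s0 False u]
      sdeg_insert_pendant[OF g(2), of 2 1 ?s1 True u]
      sdeg_insert_pendant[OF g(3), of 3 0 ?s2 True u]
      sdeg_outside[OF g(1), of 1 ?s0]
    unfolding sdeg_def by auto
  then have "sdeg ?E3 ?s3 3 = 1" "sdeg ?E3 ?s3 ` (?V3 - {3}) = {1, 0}" by auto
  then show ?thesis using t3 by (intro exI[of _ ?V3] exI[of _ ?E3] exI[of _ ?s3] exI[of _ 3]) auto
qed

lemma tree_raise_leaf:
  assumes t: "is_tree V E" and l: "l \<in> V" "sdeg E s l = 1"
    and one: "1 \<in> sdeg E s ` (V - {l})" and c: "2 \<le> c"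
  shows "\<exists>V' E' s' l'. is_tree V' E' \<and> l' \<in> V' \<and> sdeg E' s' l' = 1
    \<and> sdeg E' s' ` (V' - {l'}) = insert c (sdeg E s ` (V - {l}))
    \<and> card V' = card V + nat (c - 1)"
proof -
  obtain V' E' s' where t': "is_tree V' E'" and sub: "V \<subseteq> V'" and new: "card (V' - V) = nat (c - 1)"
    and old: "\<forall>u\<in>V - {l}. sdeg E' s' u = sdeg E s u" and at_l: "sdeg E' s' l = c"
    and leaves: "\<forall>u\<in>V' - V. sdeg E' s' u = 1"
    using tree_add_positive_leaves[OF t l(1), of "nat (c - 1)" s] l(2) c by auto
  have fV': "finite V'" using is_tree_finite[OF t'] .
  have "0 < card (V' - V)" using new c by simp
  then have "V' - V \<noteq> {}" by (metis card.empty less_irrefl)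
  then obtain l' where l': "l' \<in> V' - V" by blast
  have split: "V' - {l'} = (V - {l}) \<union> {l} \<union> (V' - V - {l'})" using sub l l' by blast
  have "sdeg E' s' ` (V' - {l'}) =
      sdeg E' s' ` (V - {l}) \<union> {sdeg E' s' l} \<union> sdeg E' s' ` (V' - V - {l'})"
    unfolding split image_Un by (simp only: image_insert image_empty)
  also have "\<dots> = insert c (sdeg E s ` (V - {l}))"
    using old at_l leaves one by force
  finally have "sdeg E' s' ` (V' - {l'}) = insert c (sdeg E s ` (V - {l}))" .
  moreover have "card V' = card V + nat (c - 1)"
    using new sub fV' by (metis card_Diff_subset card_mono finite_subset le_add_diff_inverse)
  ultimately show ?thesis using t' l' leaves by blast
qed

lemma tree_realizing_exists:
  assumes "finite X" "\<forall>c\<in>X. 2 \<le> c"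
  shows "\<exists>V E s l. is_tree V E \<and> l \<in> V \<and> sdeg E s l = 1
    \<and> sdeg E s ` (V - {l}) = {1, 0} \<union> X \<and> int (card V) = 4 + (\<Sum>c\<in>X. c - 1)"
  using assms
proof (induction X rule: finite_induct)
  case empty
  then show ?case using four_vertex_base_tree by simp
next
  case (insert c X)
  then obtain V E s l where "is_tree V E" "l \<in> V" "sdeg E s l = 1"
    and img: "sdeg E s ` (V - {l}) = {1, 0} \<union> X" and card: "int (card V) = 4 + (\<Sum>c\<in>X. c - 1)"
    by auto
  moreover have "2 \<le> c" using insert.prems by simp
  ultimately obtain V' E' s' l' where "is_tree V' E'" "l' \<in> V'" "sdeg E' s' l' = 1"
    "sdeg E' s' ` (V' - {l'}) = {1, 0} \<union> insert c X" "card V' = card V + nat (c - 1)"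
    using tree_raise_leaf[of V E l s c] by auto
  moreover have "int (card V') = 4 + (\<Sum>c\<in>insert c X. c - 1)"
    using card \<open>card V' = card V + nat (c - 1)\<close> \<open>2 \<le> c\<close> insert.hyps by simp
  ultimately show ?case by blast
qed

lemma sum_mono_two_strict:
  fixes f g :: "'a \<Rightarrow> int"
  assumes "finite A" "\<And>a. a \<in> A \<Longrightarrow> f a \<le> g a"
    and "p \<in> A" "q \<in> A" "p \<noteq> q" "f p < g p" "f q < g q"
  shows "sum f A + 2 \<le> sum g A"
proof -
  have "{p, q} \<subseteq> A" using assms(3,4) by simp
  then have split: "sum h A = sum h (A - {p, q}) + (h p + h q)" for h :: "'a \<Rightarrow> int"
    using sum.subset_diff[of "{p, q}" A h] assms(1,5) by simp
  have "sum f (A - {p, q}) \<le> sum g (A - {p, q})"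
    by (intro sum_mono) (use assms(2) in auto)
  then show ?thesis using split[of f] split[of g] assms(6,7) by linarith
qed

lemma sdeg_zero_negative_neighbour:
  assumes g: "is_graph V E" and w: "sdeg E s w = 0" "1 \<le> degree E w"
  obtains y where "y \<in> V" "y \<noteq> w" "2 \<le> degree E w" "sdeg E s y + 2 \<le> int (degree E y)"
proof -
  let ?neg = "\<lambda>u. card {e \<in> E. u \<in> e \<and> \<not> s e}"
  have deg: "int (degree E u) = sdeg E s u + 2 * int (?neg u)" for u
    using degree_eq_sdeg_plus_neg[OF is_graph_finite_edges[OF g]] .
  have "0 < ?neg w" using deg[of w] w by simp
  then have "2 \<le> degree E w" using deg[of w] w(1) by simp
  from \<open>0 < ?neg w\<close> have "{e \<in> E. w \<in> e \<and> \<not> s e} \<noteq> {}" by (metis card.empty less_irrefl)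
  then obtain e where e: "e \<in> E" "w \<in> e" "\<not> s e" by blast
  then obtain y where y: "e = {w, y}" using is_graph_edge_other[OF g] by metis
  have "0 < ?neg y"
    using e y is_graph_finite_edges[OF g] card_gt_0_iff[of "{e \<in> E. y \<in> e \<and> \<not> s e}"] by auto
  then have "sdeg E s y + 2 \<le> int (degree E y)" using deg[of y] by simp
  moreover have "y \<noteq> w" "y \<in> V" using is_graph_edge_endpoints[OF g] e(1) y by auto
  ultimately show thesis using that \<open>2 \<le> degree E w\<close> by blast
qed

lemma card_realizing_tree_ge:
  assumes r: "realizes V E s ({1, 0} \<union> X)" and X: "\<forall>c\<in>X. 1 < c"
  shows "4 + (\<Sum>c\<in>X. c - 1) \<le> int (card V)"
proof -
  have t: "is_tree V E" and img: "sdeg E s ` V = {1, 0} \<union> X" using r unfolding realizes_def by auto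
  have g: "is_graph V E" using t unfolding is_tree_def by simp
  have fV: "finite V" and fE: "finite E" using g is_graph_finite_edges unfolding is_graph_def by auto
  have nonneg: "0 \<le> sdeg E s u" if "u \<in> V" for u
  proof -
    have "sdeg E s u \<in> {1, 0} \<union> X" using that img by blast
    then show ?thesis using X by auto
  qed
  have "0 \<in> sdeg E s ` V" "1 \<in> sdeg E s ` V" using img by simp_all
  then obtain w v1 where w: "w \<in> V" "sdeg E s w = 0" and v1: "v1 \<in> V" "sdeg E s v1 = 1"
    by (metis imageE)
  have deg_pos: "1 \<le> degree E u" if "u \<in> V" for u
    using tree_degree_pos[OF t that] w v1 that by (cases "u = w") force+
  obtain y where y: "y \<in> V" "y \<noteq> w" and deg_w: "2 \<le> degree E w"
    and deg_y: "sdeg E s y + 2 \<le> int (degree E y)"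
    using sdeg_zero_negative_neighbour[OF g w(2) deg_pos[OF w(1)]] by metis
  define excess :: "int \<Rightarrow> int" where "excess c = max 0 (c - 1)" for c
  have "(\<Sum>c\<in>X. c - 1) = (\<Sum>c\<in>X. excess c)"
    using X unfolding excess_def by (intro sum.cong) auto
  also have "\<dots> \<le> (\<Sum>c\<in>sdeg E s ` V. excess c)"
    by (rule sum_mono2[OF finite_imageI[OF fV]]) (use img in \<open>auto simp: excess_def\<close>)
  also have "\<dots> \<le> (\<Sum>u\<in>V. excess (sdeg E s u))"
    using sum_image_le[OF fV, of excess "sdeg E s"] unfolding excess_def by (simp add: comp_def)
  also have "\<dots> + 2 \<le> (\<Sum>u\<in>V. int (degree E u) - 1)"
  proof (rule sum_mono_two_strict[OF fV _ w(1) y(1) y(2)[symmetric]])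
    show "excess (sdeg E s u) \<le> int (degree E u) - 1" if "u \<in> V" for u
      using degree_eq_sdeg_plus_neg[OF fE, of u s] deg_pos[OF that] unfolding excess_def by simp
    show "excess (sdeg E s w) < int (degree E w) - 1"
      using deg_w w(2) unfolding excess_def by simp
    show "excess (sdeg E s y) < int (degree E y) - 1"
      using deg_y nonneg[OF y(1)] unfolding excess_def by simp
  qed
  also have "\<dots> \<le> int (card V) - 2" using tree_sum_degree_le[OF t] .
  finally show ?thesis by simp
qed

lemma sigma_eqI:
  assumes "realizes V E s D" "\<And>V' E' s'. realizes V' E' s' D \<Longrightarrow> card V \<le> card V'"
  shows "sigma D = card V"
  unfolding sigma_def using assms by (intro Least_equality) blast+

lemma sigma_one_zero_union:
  assumes "finite X" "\<forall>c\<in>X. 1 < c"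
  shows "int (sigma ({1, 0} \<union> X)) = 4 + (\<Sum>c\<in>X. c - 1)"
proof -
  obtain V E s l where t: "is_tree V E" and l: "l \<in> V" "sdeg E s l = 1"
    and img: "sdeg E s ` (V - {l}) = {1, 0} \<union> X" and card: "int (card V) = 4 + (\<Sum>c\<in>X. c - 1)"
    using tree_realizing_exists[OF assms(1)] assms(2) by fastforce
  have "sdeg E s ` V = insert (sdeg E s l) (sdeg E s ` (V - {l}))" using l(1) by blast
  then have "realizes V E s ({1, 0} \<union> X)" using t l(2) img unfolding realizes_def by simp
  then have "sigma ({1, 0} \<union> X) = card V"
    using card card_realizing_tree_ge[OF _ assms(2)] by (intro sigma_eqI) force+
  with card show ?thesis by simp
qed

theorem mainTheorem12:
  fixes n :: nat and x :: "nat \<Rightarrow> int"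
  assumes "n \<ge> 1"
    and "inj_on x {1..n}"
    and "\<forall>i\<in>{1..n}. x i > 1"
  shows "int (sigma ({1, 0} \<union> x ` {1..n})) = 4 - int n + (\<Sum>i=1..n. x i)"
proof -
  have "int (sigma ({1, 0} \<union> x ` {1..n})) = 4 + (\<Sum>c\<in>x ` {1..n}. c - 1)"
    using assms(3) by (intro sigma_one_zero_union) auto
  also have "(\<Sum>c\<in>x ` {1..n}. c - 1) = (\<Sum>i=1..n. x i - 1)"
    using sum.reindex[OF assms(2)] by simp
  also have "\<dots> = (\<Sum>i=1..n. x i) - int n" by (simp add: sum_subtractf)
  finally show ?thesis by simp
qed

end
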